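(* Assume Conditions 1–3 of the context hold and run the projected delayed-gradient method of the context with step sizes $\eta_t=\frac{3}{\alpha t}$ for $t\in\{\tau,\dots,T-1+\tau\}$. Then for every $x_\star\in\mathcal{W}$, $$\sum_{t=k}^{T-1}\big(f_{t;k}(x_t)-f_{t;k}(x_\star)\big)\le-\frac{\alpha}{6}\sum_{t=0}^{T-1}\|x_t-x_\star\|^2+\frac{\alpha G^2(3k+5\tau+3)}{6}+\frac{3L_g^2(1+\tau)}{\alpha}\log T+\sum_{t=k}^{T-1}\Big(\frac{3}{2\alpha}\|\varepsilon_t\|^2-\varepsilon_t^{s\top}(x_t-x_\star)\Big),$$ where $\varepsilon_t^s=\nabla f_t(x_t)-\nabla f_{t;k}(x_t)$.
   Context: Let $\mathcal{W}\subseteq\mathbb{R}^d$ be convex and let $T,\tau,k,h$ be integers with $\tau\ge1$, $h\ge1$, $\tau<k<T$. On a probability space with filtration $\{\mathcal{F}_t\}_{t\ge0}$, let $F_t:\mathcal{W}^{h+1}\to\mathbb{R}$, $t\in\{0,\dots,T-1\}$, be (random) functions and $f_t(x)=F_t(x,\dots,x)$; let $f_{t;k}(x)=\mathbb{E}[f_t(x)\mid\mathcal{F}_{t-k}]$. Condition 1: each $f_t$ is $L_f$-Lipschitz on $\mathcal{W}$ with $\max_{x\in\mathcal{W}}\|\nabla^2f_t(x)\|\le\beta$, and $f_{t;k}$ is $\alpha$-strongly convex ($\nabla^2f_{t;k}(x)\succeq\alpha I_d$ on $\mathcal{W}$) for all $t\in\{k,\dots,T-1\}$. Condition 2: each $F_t$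 is $L_c$-coordinatewise-Lipschitz, i.e. changing the $j$-th argument from $x_j$ to $\tilde x_j$ changes $F_t$ by at most $L_c\|x_j-\tilde x_j\|$, for every $j\in\{0,\dots,h\}$. Condition 3: $\sup_{x,y\in\mathcal{W}}\|x-y\|\le G$, and $\|g_t\|\le L_g$ for all $t\in\{0,\dots,T-1\}$. Method (OCO with memory and delayed feedback): initialize $x_0=\cdots=x_\tau\in\mathcal{W}$; for $t=\tau,\dots,T-1+\tau$, obtain $g_{t-\tau}=\nabla f_{t-\tau}(x_{t-\tau})+\varepsilon_{t-\tau}$ where $\varepsilon_{t-\tau}\in\mathbb{R}^d$ is an (arbitrary) gradient error, and set $x_{t+1}=\Pi_{\mathcal{W}}(x_t-\eta_tg_{t-\tau})$, with $\Pi_{\mathcal{W}}$ the Euclidean projection onto $\mathcal{W}$. *)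

theory Defs
  imports "HOL-Analysis.Analysis" "HOL-Probability.Probability"
begin

definition coord_lipschitz :: "'v::real_normed_vector set \<Rightarrow> nat \<Rightarrow> real \<Rightarrow> ((nat \<Rightarrow> 'v) \<Rightarrow> real) \<Rightarrow> bool" where
  "coord_lipschitz W h L F \<longleftrightarrow>
     (\<forall>xs j y. (\<forall>i\<le>h. xs i \<in> W) \<longrightarrow> j \<le> h \<longrightarrow> y \<in> W \<longrightarrow>
        \<bar>F (xs(j := y)) - F xs\<bar> \<le> L * norm (xs j - y))"

end

theory Submission
  imports Defs
begin

text \<open>Fix \<open>s \<ge> k\<close> and write \<open>D t = \<parallel>x t - x\<^sub>\<star>\<parallel>\<^sup>2\<close>. Strong convexity of \<open>f\<^sub>s\<^sub>;\<^sub>k\<close> bounds the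
  instantaneous regret by \<open>\<langle>\<nabla>f\<^sub>s\<^sub>;\<^sub>k(x\<^sub>s), x\<^sub>s - x\<^sub>\<star>\<rangle> - \<alpha>/2 D s\<close>, and the gradient is the received
  gradient \<open>g\<^sub>s\<close> minus the errors \<open>\<epsilon>\<^sub>s\<close> and \<open>\<epsilon>\<^sub>s\<^sup>s\<close>; Young's inequality absorbs \<open>\<epsilon>\<^sub>s\<close> at the cost of
  \<open>\<alpha>/6 D s\<close>. The gradient \<open>g\<^sub>s\<close> is only used at time \<open>t = s + \<tau>\<close>, and the usual projected
  gradient inequality at that time bounds \<open>\<langle>g\<^sub>s, x\<^sub>t - x\<^sub>\<star>\<rangle>\<close> by \<open>(D t - D (t+1)) / (2\<eta>\<^sub>t)\<close> plus
  \<open>O(\<eta>\<^sub>t)\<close>, while the iterates drift by at most \<open>\<tau> \<eta>\<^sub>s L\<^sub>g\<close> between times \<open>s\<close> and \<open>t\<close>. With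
  \<open>\<eta>\<^sub>t = 3/(\<alpha> t)\<close> the telescoping sum of \<open>\<alpha> t/6 (D t - D (t+1))\<close> returns \<open>\<alpha>/6 \<Sum> D\<close> up to
  boundary terms of order \<open>(k + \<tau>) G\<^sup>2\<close>, which leaves \<open>-\<alpha>/6 \<Sum> D\<close> in total, and the \<open>O(1/s)\<close>
  terms sum to \<open>O(log T)\<close>.\<close>

lemma DERIV2_ge_imp_quadratic_lower_bound:
  fixes \<phi> \<phi>' \<phi>'' :: "real \<Rightarrow> real"
  assumes "a \<le> b"
    and d1: "\<And>s. a \<le> s \<Longrightarrow> s \<le> b \<Longrightarrow> (\<phi> has_real_derivative \<phi>' s) (at s)"
    and d2: "\<And>s. a \<le> s \<Longrightarrow> s \<le> b \<Longrightarrow> (\<phi>' has_real_derivative \<phi>'' s) (at s)"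
    and ge: "\<And>s. a \<le> s \<Longrightarrow> s \<le> b \<Longrightarrow> c \<le> \<phi>'' s"
  shows "\<phi> a + \<phi>' a * (b - a) + c / 2 * (b - a)\<^sup>2 \<le> \<phi> b"
proof -
  have slope: "\<phi>' a + c * (s - a) \<le> \<phi>' s" if s: "a \<le> s" "s \<le> b" for s
  proof -
    have "\<phi>' a - c * (a - a) \<le> \<phi>' s - c * (s - a)"
    proof (rule DERIV_nonneg_imp_nondecreasing[OF s(1)])
      fix u assume u: "a \<le> u" "u \<le> s"
      show "\<exists>y. ((\<lambda>s. \<phi>' s - c * (s - a)) has_real_derivative y) (at u) \<and> 0 \<le> y"
        using u s d2[of u] ge[of u] by (intro exI conjI) (auto intro!: derivative_eq_intros)
    qed
    then show ?thesis by simp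
  qed
  have "\<phi> a - \<phi>' a * (a - a) - c / 2 * (a - a)\<^sup>2 \<le> \<phi> b - \<phi>' a * (b - a) - c / 2 * (b - a)\<^sup>2"
  proof (rule DERIV_nonneg_imp_nondecreasing[OF assms(1)])
    fix u assume u: "a \<le> u" "u \<le> b"
    show "\<exists>y. ((\<lambda>s. \<phi> s - \<phi>' a * (s - a) - c / 2 * (s - a)\<^sup>2) has_real_derivative y) (at u) \<and> 0 \<le> y"
    proof (intro exI conjI)
      show "((\<lambda>s. \<phi> s - \<phi>' a * (s - a) - c / 2 * (s - a)\<^sup>2) has_real_derivative
          \<phi>' u - \<phi>' a - c * (u - a)) (at u)"
        using u d1[of u] by (auto intro!: derivative_eq_intros)
      show "0 \<le> \<phi>' u - \<phi>' a - c * (u - a)" using u slope[of u] by simp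
    qed
  qed
  then show ?thesis by simp
qed

lemma strongly_convex_first_order_bound:
  fixes f :: "'v::real_inner \<Rightarrow> real" and W :: "'v set"
  assumes "convex W" "a \<in> W" "b \<in> W"
    and grad: "\<And>y. y \<in> W \<Longrightarrow> GDERIV f y :> gf y"
    and hess: "\<And>y. y \<in> W \<Longrightarrow> (gf has_derivative hf y) (at y)"
    and sc: "\<And>y v. y \<in> W \<Longrightarrow> \<alpha> * (norm v)\<^sup>2 \<le> v \<bullet> hf y v"
  shows "f a + gf a \<bullet> (b - a) + \<alpha> / 2 * (norm (b - a))\<^sup>2 \<le> f b"
proof -
  define v where "v = b - a"
  define p where "p s = a + s *\<^sub>R v" for s
  have pW: "p s \<in> W" if "0 \<le> s" "s \<le> 1" for s
    using convexD[OF assms(1-3), of "1 - s" s] that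
    by (simp add: p_def v_def algebra_simps)
  have dp: "(p has_derivative (\<lambda>h. h *\<^sub>R v)) (at s)" for s
    unfolding p_def by (auto intro!: derivative_eq_intros)
  have d1: "((\<lambda>s. f (p s)) has_real_derivative gf (p s) \<bullet> v) (at s)" if "0 \<le> s" "s \<le> 1" for s
    using has_derivative_compose[OF dp grad[OF pW[OF that], unfolded gderiv_def]]
    unfolding has_field_derivative_def
    by (rule has_derivative_eq_rhs) (auto simp: inner_commute mult.commute)
  have d2: "((\<lambda>s. gf (p s) \<bullet> v) has_real_derivative hf (p s) v \<bullet> v) (at s)" if "0 \<le> s" "s \<le> 1" for s
  proof -
    have lin: "bounded_linear (hf (p s))"
      using hess[OF pW[OF that]] has_derivative_bounded_linear by blast
    show ?thesis
      using has_derivative_inner_left[OF has_derivative_compose[OF dp hess[OF pW[OF that]]]]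
      unfolding has_field_derivative_def
      by (rule has_derivative_eq_rhs) (auto simp: linear_simps(5)[OF lin] mult.commute)
  qed
  have "f (p 0) + (gf (p 0) \<bullet> v) * (1 - 0) + \<alpha> * (norm v)\<^sup>2 / 2 * (1 - 0)\<^sup>2 \<le> f (p 1)"
    by (rule DERIV2_ge_imp_quadratic_lower_bound[where \<phi>'' = "\<lambda>s. hf (p s) v \<bullet> v"])
      (use d1 d2 sc pW in \<open>auto simp: inner_commute\<close>)
  then show ?thesis by (simp add: p_def v_def)
qed

lemma inner_le_Young:
  fixes e u :: "'v::real_inner"
  assumes "0 < c"
  shows "e \<bullet> u \<le> (norm e)\<^sup>2 / (2 * c) + c / 2 * (norm u)\<^sup>2"
proof -
  have "0 \<le> (norm (e - c *\<^sub>R u))\<^sup>2" by simp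
  also have "\<dots> = (norm e)\<^sup>2 - 2 * c * (e \<bullet> u) + c\<^sup>2 * (norm u)\<^sup>2"
    unfolding power2_norm_eq_inner by (simp add: inner_commute power2_eq_square algebra_simps)
  finally show ?thesis using assms by (simp add: field_simps power2_eq_square)
qed

lemma closest_point_step_inner_le:
  fixes W :: "'v::euclidean_space set"
  assumes "convex W" "closed W" "W \<noteq> {}" "z \<in> W" "0 < \<eta>"
  shows "g \<bullet> (a - z) \<le> ((norm (a - z))\<^sup>2 - (norm (closest_point W (a - \<eta> *\<^sub>R g) - z))\<^sup>2) / (2 * \<eta>)
           + \<eta> / 2 * (norm g)\<^sup>2"
proof -
  have "norm (closest_point W (a - \<eta> *\<^sub>R g) - z) \<le> norm ((a - z) - \<eta> *\<^sub>R g)"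
    using closest_point_lipschitz[OF assms(1-3), of "a - \<eta> *\<^sub>R g" z] closest_point_self[OF assms(4)]
    by (simp add: dist_norm algebra_simps)
  then have "(norm (closest_point W (a - \<eta> *\<^sub>R g) - z))\<^sup>2 \<le> (norm ((a - z) - \<eta> *\<^sub>R g))\<^sup>2"
    by (simp add: power_mono)
  also have "\<dots> = (norm (a - z))\<^sup>2 - 2 * \<eta> * (g \<bullet> (a - z)) + \<eta>\<^sup>2 * (norm g)\<^sup>2"
    unfolding power2_norm_eq_inner by (simp add: inner_commute power2_eq_square algebra_simps)
  finally show ?thesis using assms(5) by (simp add: field_simps power2_eq_square)
qed

lemma closest_point_step_dist_le:
  fixes W :: "'v::euclidean_space set"
  assumes "convex W" "closed W" "W \<noteq> {}" "a \<in> W"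
  shows "norm (closest_point W (a - \<eta> *\<^sub>R g) - a) \<le> \<bar>\<eta>\<bar> * norm g"
  using closest_point_lipschitz[OF assms(1-3), of "a - \<eta> *\<^sub>R g" a] closest_point_self[OF assms(4)]
  by (simp add: dist_norm)

lemma sum_inverse_le_ln:
  assumes "2 \<le> k" "k \<le> n"
  shows "(\<Sum>s=k..<n. 1 / real s) \<le> ln (real n - 1)"
  using assms(2)
proof (induction n rule: dec_induct)
  case base
  then show ?case using assms(1) by simp
next
  case (step n)
  have n2: "2 \<le> real n" using step assms(1) by simp
  have "ln ((real n - 1) / real n) \<le> (real n - 1) / real n - 1"
    using n2 by (intro ln_le_minus_one) simp
  then have "1 / real n \<le> ln (real n) - ln (real n - 1)"
    using n2 by (simp add: ln_div field_simps)
  then show ?case using step by simp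
qed

lemma sum_weighted_telescope:
  fixes E :: "nat \<Rightarrow> real"
  assumes "a \<le> n"
  shows "(\<Sum>t=a..<n. (real t + c) * (E t - E (t + 1)))
       = (\<Sum>t=a..<n. E (t + 1)) + (real a + c) * E a - (real n + c) * E n"
  using assms by (induction n rule: dec_induct) (simp_all add: algebra_simps)

lemma weighted_telescope_le:
  fixes D :: "nat \<Rightarrow> real"
  assumes "k \<le> T"
    and D_nonneg: "\<And>t. 0 \<le> D t" and D_le: "\<And>t. t \<le> T + \<tau> \<Longrightarrow> D t \<le> G\<^sup>2"
  shows "(\<Sum>s=k..<T. (real s + real \<tau>) * (D (s + \<tau>) - D (s + \<tau> + 1)))
       \<le> (\<Sum>s=k..<T. D s) + (real k + 2 * real \<tau> + 1) * G\<^sup>2"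
proof -
  have "(\<Sum>s=k..<T. D (s + (\<tau> + 1))) = (\<Sum>t=k + (\<tau> + 1)..<T + (\<tau> + 1). D t)"
    using sum.shift_bounds_nat_ivl[of D k "\<tau> + 1" T] by simp
  also have "\<dots> \<le> (\<Sum>t=k..<T + (\<tau> + 1). D t)"
    by (rule sum_mono2) (auto simp: D_nonneg)
  also have "\<dots> = (\<Sum>s=k..<T. D s) + (\<Sum>t=T..<T + (\<tau> + 1). D t)"
    using assms(1) by (intro sum.atLeastLessThan_concat[symmetric]) auto
  also have "(\<Sum>t=T..<T + (\<tau> + 1). D t) \<le> of_nat (card {T..<T + (\<tau> + 1)}) * G\<^sup>2"
    by (rule sum_bounded_above) (auto intro: D_le)
  finally have shifted: "(\<Sum>s=k..<T. D (s + (\<tau> + 1))) \<le> (\<Sum>s=k..<T. D s) + (real \<tau> + 1) * G\<^sup>2"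
    by (simp add: add.commute)
  have "(real k + real \<tau>) * D (k + \<tau>) \<le> (real k + real \<tau>) * G\<^sup>2"
    using D_le[of "k + \<tau>"] assms(1) by (intro mult_left_mono) auto
  moreover have "0 \<le> (real T + real \<tau>) * D (T + \<tau>)" using D_nonneg by simp
  ultimately show ?thesis
    using sum_weighted_telescope[OF assms(1), of "real \<tau>" "\<lambda>s. D (s + \<tau>)"] shifted
    by (simp add: add.assoc algebra_simps)
qed

lemma telescoped_regret_sum_le:
  fixes r R D :: "nat \<Rightarrow> real"
  assumes "0 < \<alpha>" "0 \<le> c" "2 \<le> k" "k \<le> T"
    and D_nonneg: "\<And>t. 0 \<le> D t" and D_le: "\<And>t. t \<le> T + \<tau> \<Longrightarrow> D t \<le> G\<^sup>2"
    and per_step: "\<And>s. k \<le> s \<Longrightarrow> s < T \<Longrightarrow>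
      r s \<le> \<alpha> / 6 * ((real s + real \<tau>) * (D (s + \<tau>) - D (s + \<tau> + 1))) - \<alpha> / 3 * D s
             + R s + c / real s"
  shows "(\<Sum>s=k..<T. r s) \<le> - (\<alpha> / 6) * (\<Sum>s<T. D s) + \<alpha> * G\<^sup>2 * (3 * real k + 5 * real \<tau> + 3) / 6
           + c * ln (real T) + (\<Sum>s=k..<T. R s)"
proof -
  define A where "A = (\<Sum>s=k..<T. D s)"
  define B where "B = (\<Sum>s<k. D s)"
  have "(\<Sum>s=k..<T. r s) \<le> (\<Sum>s=k..<T. \<alpha> / 6 * ((real s + real \<tau>) * (D (s + \<tau>) - D (s + \<tau> + 1)))
      - \<alpha> / 3 * D s + R s + c / real s)"
    by (intro sum_mono per_step) auto
  also have "\<dots> = \<alpha> / 6 * (\<Sum>s=k..<T. (real s + real \<tau>) * (D (s + \<tau>) - D (s + \<tau> + 1)))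
      - \<alpha> / 3 * A + (\<Sum>s=k..<T. R s) + c * (\<Sum>s=k..<T. 1 / real s)"
    by (simp add: A_def sum.distrib sum_subtractf sum_distrib_left)
  also have "\<dots> \<le> \<alpha> / 6 * (A + (real k + 2 * real \<tau> + 1) * G\<^sup>2)
      - \<alpha> / 3 * A + (\<Sum>s=k..<T. R s) + c * ln (real T)"
  proof -
    have "(\<Sum>s=k..<T. 1 / real s) \<le> ln (real T - 1)"
      by (rule sum_inverse_le_ln[OF assms(3,4)])
    also have "\<dots> \<le> ln (real T)"
      using assms(3,4) by (subst ln_le_cancel_iff) auto
    finally have "c * (\<Sum>s=k..<T. 1 / real s) \<le> c * ln (real T)"
      using assms(2) by (rule mult_left_mono)
    moreover have "\<alpha> / 6 * (\<Sum>s=k..<T. (real s + real \<tau>) * (D (s + \<tau>) - D (s + \<tau> + 1)))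
        \<le> \<alpha> / 6 * (A + (real k + 2 * real \<tau> + 1) * G\<^sup>2)"
      using weighted_telescope_le[OF assms(4) D_nonneg D_le] assms(1)
      unfolding A_def by (intro mult_left_mono) auto
    ultimately show ?thesis by linarith
  qed
  also have "\<dots> \<le> - (\<alpha> / 6) * (B + A) + \<alpha> * G\<^sup>2 * (3 * real k + 5 * real \<tau> + 3) / 6
      + c * ln (real T) + (\<Sum>s=k..<T. R s)" (is "?lhs \<le> ?rhs")
  proof -
    have "B \<le> of_nat (card {..<k}) * G\<^sup>2"
      unfolding B_def by (rule sum_bounded_above) (use assms(4) in \<open>auto intro: D_le\<close>)
    then have "0 \<le> \<alpha> / 6 * ((real k + 3 * real \<tau> + 2) * G\<^sup>2 + (real k * G\<^sup>2 - B))"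
      using assms(1) by simp
    also have "\<dots> = ?rhs - ?lhs" by (simp add: field_simps)
    finally show ?thesis by simp
  qed
  also have "B + A = (\<Sum>s<T. D s)"
    unfolding A_def B_def lessThan_atLeast0 using assms(4) by (intro sum.atLeastLessThan_concat) auto
  finally show ?thesis .
qed

lemma strongly_convex_gap_le:
  fixes a z ge e \<delta> :: "'v::real_inner"
  assumes "0 < \<alpha>"
    and sc: "f a + (ge - e - \<delta>) \<bullet> (z - a) + \<alpha> / 2 * (norm (z - a))\<^sup>2 \<le> f z"
  shows "f a - f z \<le> ge \<bullet> (a - z) + (3 / (2 * \<alpha>) * (norm e)\<^sup>2 - \<delta> \<bullet> (a - z))
           - \<alpha> / 3 * (norm (a - z))\<^sup>2"
proof -
  have "e \<bullet> (z - a) \<le> (norm e)\<^sup>2 / (2 * (\<alpha> / 3)) + \<alpha> / 3 / 2 * (norm (z - a))\<^sup>2"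
    using assms(1) by (intro inner_le_Young) simp
  then have "e \<bullet> (z - a) \<le> 3 / (2 * \<alpha>) * (norm e)\<^sup>2 + \<alpha> / 6 * (norm (a - z))\<^sup>2"
    by (simp add: norm_minus_commute)
  moreover have "(ge - e - \<delta>) \<bullet> (z - a) = \<delta> \<bullet> (a - z) - ge \<bullet> (a - z) - e \<bullet> (z - a)"
    by (simp add: inner_diff_left inner_diff_right)
  ultimately show ?thesis
    using sc by (simp add: norm_minus_commute)
qed

locale delayed_projected_gd =
  fixes W :: "'v::euclidean_space set" and x g :: "nat \<Rightarrow> 'v" and \<eta> :: "nat \<Rightarrow> real"
    and \<alpha> Lg :: real and \<tau> T :: nat
  assumes W: "convex W" "closed W" "W \<noteq> {}"
    and alpha_pos: "0 < \<alpha>"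
    and step_size: "\<And>t. \<tau> \<le> t \<Longrightarrow> t \<le> T - 1 + \<tau> \<Longrightarrow> \<eta> t = 3 / (\<alpha> * real t)"
    and x0_in: "x 0 \<in> W"
    and init: "\<And>t. t \<le> \<tau> \<Longrightarrow> x t = x 0"
    and update: "\<And>t. \<tau> \<le> t \<Longrightarrow> t \<le> T - 1 + \<tau> \<Longrightarrow>
      x (t + 1) = closest_point W (x t - \<eta> t *\<^sub>R g (t - \<tau>))"
    and g_bound: "\<And>t. t < T \<Longrightarrow> norm (g t) \<le> Lg"
begin

lemma iterate_in: "t \<le> T + \<tau> \<Longrightarrow> x t \<in> W"
proof (induction t)
  case 0
  then show ?case by (simp add: x0_in)
next
  case (Suc t)
  show ?case
  proof (cases "Suc t \<le> \<tau>")
    case True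
    then show ?thesis using init x0_in by metis
  next
    case False
    then show ?thesis
      using Suc.prems update[of t] closest_point_in_set[OF W(2,3)] by simp
  qed
qed

lemma Lg_nonneg: "0 < T \<Longrightarrow> 0 \<le> Lg"
  using g_bound norm_ge_zero order_trans by blast

lemma iterate_step_norm_le:
  assumes "\<tau> \<le> j" "j < T + \<tau>"
  shows "norm (x (j + 1) - x j) \<le> 3 * Lg / (\<alpha> * real j)"
proof -
  have "norm (x (j + 1) - x j) \<le> \<bar>\<eta> j\<bar> * norm (g (j - \<tau>))"
    using update[of j] closest_point_step_dist_le[OF W iterate_in] assms by simp
  also have "\<dots> = 3 / (\<alpha> * real j) * norm (g (j - \<tau>))"
    using step_size[of j] assms alpha_pos by simp
  also have "\<dots> \<le> 3 / (\<alpha> * real j) * Lg"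
    using g_bound[of "j - \<tau>"] assms alpha_pos by (intro mult_left_mono) auto
  finally show ?thesis by simp
qed

lemma delay_drift_le:
  assumes "\<tau> \<le> s" "0 < s" "s < T"
  shows "norm (x (s + \<tau>) - x s) \<le> real \<tau> * (3 * Lg / (\<alpha> * real s))"
proof -
  have "x (s + \<tau>) - x s = (\<Sum>j<\<tau>. x (s + j + 1) - x (s + j))"
    using sum_lessThan_telescope[of "\<lambda>j. x (s + j)" \<tau>] by simp
  then have "norm (x (s + \<tau>) - x s) \<le> (\<Sum>j<\<tau>. norm (x (s + j + 1) - x (s + j)))"
    by (simp add: norm_sum)
  also have "\<dots> \<le> (\<Sum>j<\<tau>. 3 * Lg / (\<alpha> * real s))"
  proof (rule sum_mono)
    fix j assume "j \<in> {..<\<tau>}"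
    then have "norm (x (s + j + 1) - x (s + j)) \<le> 3 * Lg / (\<alpha> * real (s + j))"
      using assms by (intro iterate_step_norm_le) auto
    also have "\<dots> \<le> 3 * Lg / (\<alpha> * real s)"
      using Lg_nonneg alpha_pos assms by (intro divide_left_mono) auto
    finally show "norm (x (s + j + 1) - x (s + j)) \<le> 3 * Lg / (\<alpha> * real s)" .
  qed
  finally show ?thesis by simp
qed

lemma projected_step_inner_le:
  assumes "\<tau> \<le> t" "0 < t" "t < T + \<tau>" "z \<in> W"
  shows "g (t - \<tau>) \<bullet> (x t - z)
      \<le> \<alpha> / 6 * (real t * ((norm (x t - z))\<^sup>2 - (norm (x (t + 1) - z))\<^sup>2)) + 3 / (2 * \<alpha> * real t) * Lg\<^sup>2"
proof -
  have \<eta>_t: "\<eta> t = 3 / (\<alpha> * real t)"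
    using step_size assms by simp
  then have "0 < \<eta> t" using alpha_pos assms(2) by simp
  have "(norm (g (t - \<tau>)))\<^sup>2 \<le> Lg\<^sup>2"
    using g_bound[of "t - \<tau>"] assms by (intro power_mono) auto
  then have "\<eta> t / 2 * (norm (g (t - \<tau>)))\<^sup>2 \<le> \<eta> t / 2 * Lg\<^sup>2"
    using \<open>0 < \<eta> t\<close> by (intro mult_left_mono) auto
  moreover have "\<eta> t / 2 = 3 / (2 * \<alpha> * real t)"
    using \<eta>_t by simp
  ultimately have g_term: "\<eta> t / 2 * (norm (g (t - \<tau>)))\<^sup>2 \<le> 3 / (2 * \<alpha> * real t) * Lg\<^sup>2"
    by (simp only:)
  have step_weight: "N / (2 * \<eta> t) = \<alpha> / 6 * (real t * N)" for N
    using \<eta>_t alpha_pos assms(2) by simp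
  have "g (t - \<tau>) \<bullet> (x t - z) \<le> ((norm (x t - z))\<^sup>2 - (norm (x (t + 1) - z))\<^sup>2) / (2 * \<eta> t)
      + \<eta> t / 2 * (norm (g (t - \<tau>)))\<^sup>2"
    using closest_point_step_inner_le[OF W assms(4) \<open>0 < \<eta> t\<close>] update[of t] assms by simp
  also have "\<dots> \<le> \<alpha> / 6 * (real t * ((norm (x t - z))\<^sup>2 - (norm (x (t + 1) - z))\<^sup>2))
      + 3 / (2 * \<alpha> * real t) * Lg\<^sup>2"
    unfolding step_weight using g_term by (rule add_left_mono)
  finally show ?thesis .
qed

lemma delayed_step_inner_le:
  assumes "\<tau> \<le> s" "0 < s" "s < T" "z \<in> W"
  shows "g s \<bullet> (x s - z) \<le> \<alpha> / 6 * ((real s + real \<tau>) *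
           ((norm (x (s + \<tau>) - z))\<^sup>2 - (norm (x (s + \<tau> + 1) - z))\<^sup>2))
         + 3 * Lg\<^sup>2 * (1 + real \<tau>) / \<alpha> / real s"
proof -
  define t where "t = s + \<tau>"
  have at_t: "g s \<bullet> (x t - z)
      \<le> \<alpha> / 6 * (real t * ((norm (x t - z))\<^sup>2 - (norm (x (t + 1) - z))\<^sup>2)) + 3 / (2 * \<alpha> * real t) * Lg\<^sup>2"
    using projected_step_inner_le[of t z] assms by (simp add: t_def)
  have "g s \<bullet> (x s - x t) \<le> norm (g s) * norm (x t - x s)"
    using norm_cauchy_schwarz[of "g s" "x s - x t"] by (simp add: norm_minus_commute)
  also have "\<dots> \<le> Lg * (real \<tau> * (3 * Lg / (\<alpha> * real s)))"
    using g_bound[OF assms(3)] delay_drift_le[OF assms(1-3)] Lg_nonneg assms(3)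
    by (intro mult_mono) (auto simp: t_def)
  finally have drift: "g s \<bullet> (x s - x t) \<le> 3 * Lg\<^sup>2 * real \<tau> / \<alpha> / real s"
    by (simp add: power2_eq_square field_simps)
  have "3 / (2 * \<alpha> * real t) * Lg\<^sup>2 \<le> 3 / (\<alpha> * real s) * Lg\<^sup>2"
    using alpha_pos assms by (intro mult_right_mono divide_left_mono) (auto simp: t_def)
  moreover have "3 * Lg\<^sup>2 * (1 + real \<tau>) / \<alpha> / real s
      = 3 / (\<alpha> * real s) * Lg\<^sup>2 + 3 * Lg\<^sup>2 * real \<tau> / \<alpha> / real s"
    using alpha_pos assms(2) by (simp add: field_simps)
  moreover have "g s \<bullet> (x s - z) = g s \<bullet> (x t - z) + g s \<bullet> (x s - x t)"
    by (simp add: inner_diff_right)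
  ultimately show ?thesis
    using at_t drift unfolding t_def[symmetric] of_nat_add[symmetric] by linarith
qed

lemma delayed_step_regret_le:
  fixes f :: "'v \<Rightarrow> real"
  assumes "\<tau> \<le> s" "0 < s" "s < T" "z \<in> W"
    and grad: "\<And>y. y \<in> W \<Longrightarrow> GDERIV f y :> gf y"
    and hess: "\<And>y. y \<in> W \<Longrightarrow> (gf has_derivative hf y) (at y)"
    and sc: "\<And>y v. y \<in> W \<Longrightarrow> \<alpha> * (norm v)\<^sup>2 \<le> v \<bullet> hf y v"
    and biased: "gf (x s) = g s - e - \<delta>"
  shows "f (x s) - f z \<le> \<alpha> / 6 * ((real s + real \<tau>) *
           ((norm (x (s + \<tau>) - z))\<^sup>2 - (norm (x (s + \<tau> + 1) - z))\<^sup>2))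
         - \<alpha> / 3 * (norm (x s - z))\<^sup>2 + (3 / (2 * \<alpha>) * (norm e)\<^sup>2 - \<delta> \<bullet> (x s - z))
         + 3 * Lg\<^sup>2 * (1 + real \<tau>) / \<alpha> / real s"
proof -
  have "x s \<in> W" using iterate_in assms(3) by simp
  have "f (x s) + (g s - e - \<delta>) \<bullet> (z - x s) + \<alpha> / 2 * (norm (z - x s))\<^sup>2 \<le> f z"
    using strongly_convex_first_order_bound[OF W(1) \<open>x s \<in> W\<close> assms(4) grad hess sc]
    unfolding biased .
  then have "f (x s) - f z \<le> g s \<bullet> (x s - z) + (3 / (2 * \<alpha>) * (norm e)\<^sup>2 - \<delta> \<bullet> (x s - z))
      - \<alpha> / 3 * (norm (x s - z))\<^sup>2"
    by (rule strongly_convex_gap_le[OF alpha_pos])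
  then show ?thesis
    using delayed_step_inner_le[OF assms(1-4)] by linarith
qed

end

theorem lemma12:
  fixes M :: "'a measure" and Fil :: "nat \<Rightarrow> 'a measure"
    and W :: "'v::euclidean_space set"
    and T \<tau> k h :: nat
    and F :: "nat \<Rightarrow> 'a \<Rightarrow> (nat \<Rightarrow> 'v) \<Rightarrow> real"
    and gradf :: "nat \<Rightarrow> 'a \<Rightarrow> 'v \<Rightarrow> 'v" and hessf :: "nat \<Rightarrow> 'a \<Rightarrow> 'v \<Rightarrow> 'v \<Rightarrow> 'v"
    and fk :: "nat \<Rightarrow> 'a \<Rightarrow> 'v \<Rightarrow> real"
    and gradfk :: "nat \<Rightarrow> 'a \<Rightarrow> 'v \<Rightarrow> 'v" and hessfk :: "nat \<Rightarrow> 'a \<Rightarrow> 'v \<Rightarrow> 'v \<Rightarrow> 'v"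
    and Lf \<beta> \<alpha> Lc G Lg :: real
    and \<eta> :: "nat \<Rightarrow> real"
    and x :: "'a \<Rightarrow> nat \<Rightarrow> 'v" and \<epsilon> g :: "'a \<Rightarrow> nat \<Rightarrow> 'v"
    and xstar :: 'v and \<omega> :: 'a
  assumes prob: "prob_space M"
    and filt: "filtration (space M) Fil"
    and subalg: "\<And>t. subalgebra M (Fil t)"
    and W_convex: "convex W" and W_closed: "closed W" and W_ne: "W \<noteq> {}"
    and idx: "1 \<le> \<tau>" "1 \<le> h" "\<tau> < k" "k < T"
    \<comment> \<open>the F_t are random functions\<close>
    and F_meas: "\<And>t xs. t < T \<Longrightarrow> (\<lambda>w. F t w xs) \<in> borel_measurable M"
    and f_int: "\<And>t y. t < T \<Longrightarrow> y \<in> W \<Longrightarrow> integrable M (\<lambda>w. F t w (\<lambda>_. y))"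
    \<comment> \<open>f_{t;k}(y) = E[f_t(y) | F_{t-k}]\<close>
    and fk_cond: "\<And>t y. k \<le> t \<Longrightarrow> t < T \<Longrightarrow> y \<in> W \<Longrightarrow>
        AE w in M. fk t w y = real_cond_exp M (Fil (t - k)) (\<lambda>w'. F t w' (\<lambda>_. y)) w"
    \<comment> \<open>Condition 1\<close>
    and f_grad: "\<And>t w y. t < T \<Longrightarrow> w \<in> space M \<Longrightarrow> y \<in> W \<Longrightarrow>
        GDERIV (\<lambda>z. F t w (\<lambda>_. z)) y :> gradf t w y"
    and f_hess: "\<And>t w y. t < T \<Longrightarrow> w \<in> space M \<Longrightarrow> y \<in> W \<Longrightarrow>
        (gradf t w has_derivative hessf t w y) (at y)"
    and f_lip: "\<And>t w. t < T \<Longrightarrow> w \<in> space M \<Longrightarrow> lipschitz_on Lf W (\<lambda>z. F t w (\<lambda>_. z))"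
    and f_hess_bd: "\<And>t w y. t < T \<Longrightarrow> w \<in> space M \<Longrightarrow> y \<in> W \<Longrightarrow> onorm (hessf t w y) \<le> \<beta>"
    and fk_grad: "\<And>t w y. k \<le> t \<Longrightarrow> t < T \<Longrightarrow> w \<in> space M \<Longrightarrow> y \<in> W \<Longrightarrow>
        GDERIV (fk t w) y :> gradfk t w y"
    and fk_hess: "\<And>t w y. k \<le> t \<Longrightarrow> t < T \<Longrightarrow> w \<in> space M \<Longrightarrow> y \<in> W \<Longrightarrow>
        (gradfk t w has_derivative hessfk t w y) (at y)"
    and alpha_pos: "0 < \<alpha>"
    and fk_sc: "\<And>t w y v. k \<le> t \<Longrightarrow> t < T \<Longrightarrow> w \<in> space M \<Longrightarrow> y \<in> W \<Longrightarrow>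
        \<alpha> * (norm v)\<^sup>2 \<le> v \<bullet> hessfk t w y v"
    \<comment> \<open>Condition 2\<close>
    and F_coord: "\<And>t w. t < T \<Longrightarrow> w \<in> space M \<Longrightarrow> coord_lipschitz W h Lc (F t w)"
    \<comment> \<open>Condition 3\<close>
    and diam: "\<And>y z. y \<in> W \<Longrightarrow> z \<in> W \<Longrightarrow> norm (y - z) \<le> G"
    and g_bd: "\<And>w t. w \<in> space M \<Longrightarrow> t < T \<Longrightarrow> norm (g w t) \<le> Lg"
    \<comment> \<open>the method\<close>
    and step: "\<And>t. \<tau> \<le> t \<Longrightarrow> t \<le> T - 1 + \<tau> \<Longrightarrow> \<eta> t = 3 / (\<alpha> * real t)"
    and init_W: "\<And>w. w \<in> space M \<Longrightarrow> x w 0 \<in> W"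
    and init: "\<And>w t. w \<in> space M \<Longrightarrow> t \<le> \<tau> \<Longrightarrow> x w t = x w 0"
    and g_def: "\<And>w t. w \<in> space M \<Longrightarrow> t < T \<Longrightarrow> g w t = gradf t w (x w t) + \<epsilon> w t"
    and upd: "\<And>w t. w \<in> space M \<Longrightarrow> \<tau> \<le> t \<Longrightarrow> t \<le> T - 1 + \<tau> \<Longrightarrow>
        x w (t + 1) = closest_point W (x w t - \<eta> t *\<^sub>R g w (t - \<tau>))"
    and xstar: "xstar \<in> W"
    and omega: "\<omega> \<in> space M"
  shows "(\<Sum>t=k..T-1. fk t \<omega> (x \<omega> t) - fk t \<omega> xstar)
     \<le> - (\<alpha> / 6) * (\<Sum>t<T. (norm (x \<omega> t - xstar))\<^sup>2)
       + \<alpha> * G\<^sup>2 * (3 * real k + 5 * real \<tau> + 3) / 6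
       + 3 * Lg\<^sup>2 * (1 + real \<tau>) / \<alpha> * ln (real T)
       + (\<Sum>t=k..T-1. 3 / (2 * \<alpha>) * (norm (\<epsilon> \<omega> t))\<^sup>2
            - (gradf t \<omega> (x \<omega> t) - gradfk t \<omega> (x \<omega> t)) \<bullet> (x \<omega> t - xstar))"
proof -
  interpret delayed_projected_gd W "x \<omega>" "g \<omega>" \<eta> \<alpha> Lg \<tau> T
    using W_convex W_closed W_ne alpha_pos step init_W[OF omega] init[OF omega] upd[OF omega]
      g_bd[OF omega]
    by unfold_locales
  define D where "D t = (norm (x \<omega> t - xstar))\<^sup>2" for t
  define R where "R t = 3 / (2 * \<alpha>) * (norm (\<epsilon> \<omega> t))\<^sup>2
    - (gradf t \<omega> (x \<omega> t) - gradfk t \<omega> (x \<omega> t)) \<bullet> (x \<omega> t - xstar)" for t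
  have per_step: "fk s \<omega> (x \<omega> s) - fk s \<omega> xstar
      \<le> \<alpha> / 6 * ((real s + real \<tau>) * (D (s + \<tau>) - D (s + \<tau> + 1))) - \<alpha> / 3 * D s
        + R s + 3 * Lg\<^sup>2 * (1 + real \<tau>) / \<alpha> / real s"
    if s: "k \<le> s" "s < T" for s
  proof -
    have "gradfk s \<omega> (x \<omega> s) = g \<omega> s - \<epsilon> \<omega> s - (gradf s \<omega> (x \<omega> s) - gradfk s \<omega> (x \<omega> s))"
      using g_def[OF omega s(2)] by simp
    from delayed_step_regret_le[OF _ _ s(2) xstar fk_grad[OF s omega] fk_hess[OF s omega]
        fk_sc[OF s omega] this]
    show ?thesis using s idx unfolding D_def R_def by simp
  qed
  have D_le: "D t \<le> G\<^sup>2" if "t \<le> T + \<tau>" for t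
    unfolding D_def using diam[OF iterate_in[OF that] xstar] by (intro power_mono) auto
  have "(\<Sum>s=k..<T. fk s \<omega> (x \<omega> s) - fk s \<omega> xstar) \<le> - (\<alpha> / 6) * (\<Sum>s<T. D s)
      + \<alpha> * G\<^sup>2 * (3 * real k + 5 * real \<tau> + 3) / 6
      + 3 * Lg\<^sup>2 * (1 + real \<tau>) / \<alpha> * ln (real T) + (\<Sum>s=k..<T. R s)"
    using alpha_pos idx
    by (intro telescoped_regret_sum_le[where D = D, OF _ _ _ _ _ D_le per_step]) (auto simp: D_def)
  moreover have "{k..T - 1} = {k..<T}" using idx by auto
  ultimately show ?thesis by (simp add: D_def R_def)
qed

end
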